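(* Let $a:\mathcal H\to k$ be an infinitesimal character of $\mathcal H$, i.e. $a(xy)=a(x)\epsilon(y)+\epsilon(x)a(y)$ for all $x,y\in\mathcal H$. Then ${}^tL_a=(a\otimes\mathrm{Id})\circ\Phi$ is a biderivation of the Hopf algebra $\mathcal H_{CK}$: it is a derivation of the algebra $\mathcal H_{CK}$ and satisfies $\Delta_{CK}\circ{}^tL_a=({}^tL_a\otimes\mathrm{Id}+\mathrm{Id}\otimes{}^tL_a)\circ\Delta_{CK}$. Similarly, if $\varphi:\mathcal H\to k$ is a character (unital algebra morphism) of $\mathcal H$, then ${}^tL_\varphi=(\varphi\otimes\mathrm{Id})\circ\Phi$ is a Hopf algebra automorphism of $\mathcal H_{CK}$.
   Context: Let $k$ be a field of characteristic $0$. Rooted trees are finite and non-planar; $\bullet$ denotes the one-vertex tree. (1) $\mathcal H$ is the free commutative $k$-algebra generated by isomorphism classes of rooted trees with at least one edge, with unit identified with $\bullet$; its counit $\epsilon$ satisfies $\epsilon(\bullet)=1$ and vanishes on every tree with at least one edge. A subforest of a rooted tree $t$ is either the trivial subforest $\bullet$ or a nonempty set of pairwise vertex-disjoint subtrees of $t$ each with at least one edge, identified with the product of its components; $t/s$ is the tree obtained by contracting each component of $s$ to a vertex. The coproduct is multiplicative with $\Delta(t)=\sum_s s\otimes t/s$ over subforests of $t$ (as subsets). (2) $\mathcal H_{CK}$ is the Connes–Kreimer Hopf algebra: the free commutative $k$-algebra on isomorphism classes of nonempty rooted trees, unit the empty forest $\mathbf 1$, coproduct $\Delta_{CK}(u)=\sum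 v\otimes w$ over decompositions $U=V\sqcup W$ of the vertex set of the forest $u$ such that no vertex of $V$ lies strictly below a vertex of $W$ (in the order $x\le y$ iff the path from a root to $y$ passes through $x$), $v,w$ the induced forests. (3) $\Phi:\mathcal H_{CK}\to\mathcal H\otimes\mathcal H_{CK}$ is the algebra morphism with $\Phi(\mathbf 1)=\bullet\otimes\mathbf 1$ and $\Phi(t)=\sum_s s\otimes t/s$ for each nonempty tree $t$ (sum over subforests $s$ of $t$, $s\in\mathcal H$, $t/s\in\mathcal H_{CK}$). *)

theory Defs
  imports "HOL-Library.Multiset" "HOL-Library.Poly_Mapping" "HOL-Library.Product_Plus"
begin

text \<open>Finite non-planar rooted trees up to isomorphism: a vertex with a multiset of
  subtrees (its children). A forest (monomial) is a multiset of trees.\<close>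

datatype tree = Node (children: "tree multiset")

type_synonym forest = "tree multiset"

abbreviation dot :: tree where "dot \<equiv> Node {#}"

definition has_edge :: "tree \<Rightarrow> bool" where
  "has_edge t \<longleftrightarrow> t \<noteq> dot"

text \<open>the root component as an element of a forest in H: omitted if it is a single vertex\<close>
definition nt :: "tree \<Rightarrow> forest" where
  "nt t = (if has_edge t then {#t#} else {#})"

definition smult :: "'k::comm_semiring_1 \<Rightarrow> ('b \<Rightarrow>\<^sub>0 'k) \<Rightarrow> ('b \<Rightarrow>\<^sub>0 'k)" where
  "smult c p = Poly_Mapping.map (\<lambda>v. c * v) p"

definition lext :: "('b \<Rightarrow> ('c \<Rightarrow>\<^sub>0 'k::comm_semiring_1)) \<Rightarrow> ('b \<Rightarrow>\<^sub>0 'k) \<Rightarrow> ('c \<Rightarrow>\<^sub>0 'k)" where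
  "lext f x = (\<Sum>b\<in>Poly_Mapping.keys x. smult (Poly_Mapping.lookup x b) (f b))"

definition lfun :: "('b \<Rightarrow> 'k::comm_semiring_1) \<Rightarrow> ('b \<Rightarrow>\<^sub>0 'k) \<Rightarrow> 'k" where
  "lfun a x = (\<Sum>b\<in>Poly_Mapping.keys x. Poly_Mapping.lookup x b * a b)"

definition tensor :: "('b \<Rightarrow>\<^sub>0 'k::comm_semiring_1) \<Rightarrow> ('c \<Rightarrow>\<^sub>0 'k) \<Rightarrow> ('b \<times> 'c \<Rightarrow>\<^sub>0 'k)" where
  "tensor p q = (\<Sum>F\<in>Poly_Mapping.keys p. \<Sum>G\<in>Poly_Mapping.keys q. Poly_Mapping.single (F, G) (Poly_Mapping.lookup p F * Poly_Mapping.lookup q G))"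

definition tmap :: "(('b \<Rightarrow>\<^sub>0 'k::comm_semiring_1) \<Rightarrow> ('d \<Rightarrow>\<^sub>0 'k)) \<Rightarrow> (('c \<Rightarrow>\<^sub>0 'k) \<Rightarrow> ('e \<Rightarrow>\<^sub>0 'k))
    \<Rightarrow> ('b \<times> 'c \<Rightarrow>\<^sub>0 'k) \<Rightarrow> ('d \<times> 'e \<Rightarrow>\<^sub>0 'k)" where
  "tmap f g X = (\<Sum>p\<in>Poly_Mapping.keys X. smult (Poly_Mapping.lookup X p)
      (tensor (f (Poly_Mapping.single (fst p) 1)) (g (Poly_Mapping.single (snd p) 1))))"

definition of_nat_pm :: "('b \<Rightarrow>\<^sub>0 nat) \<Rightarrow> ('b \<Rightarrow>\<^sub>0 'k::comm_semiring_1)" where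
  "of_nat_pm p = Poly_Mapping.map of_nat p"

text \<open>Both H_CK and H are represented on the type forest =>0 k (free commutative
  algebra, monomials = forests, product = convolution, unit = empty forest).
  H_CK is the whole type; H is the subalgebra spanned by forests of trees with at least
  one edge, its unit (the empty monomial) being identified with the one-vertex tree.\<close>

definition Hset :: "(forest \<Rightarrow>\<^sub>0 'k::comm_ring_1) set" where
  "Hset = {x. \<forall>F\<in>Poly_Mapping.keys x. \<forall>t\<in>#F. has_edge t}"

text \<open>counit of H: epsilon(dot)=1, zero on trees with an edge, multiplicative;
  and counit of H_CK: epsilon(empty forest) = 1, zero on nonempty trees\<close>
definition epsH :: "(forest \<Rightarrow>\<^sub>0 'k::comm_ring_1) \<Rightarrow> 'k" where
  "epsH x = Poly_Mapping.lookup x {#}"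

definition epsCK :: "(forest \<Rightarrow>\<^sub>0 'k::comm_ring_1) \<Rightarrow> 'k" where
  "epsCK x = Poly_Mapping.lookup x {#}"

text \<open>cuts t: multiset (as nat-valued poly mapping) of pairs (V,W) of forests, over vertex
  decompositions of t with no vertex of V strictly below a vertex of W. Either the whole
  tree is in V, or the root is in W and each child subtree is decomposed recursively.\<close>

definition graft :: "(forest \<times> forest \<Rightarrow>\<^sub>0 nat) \<Rightarrow> (forest \<times> forest \<Rightarrow>\<^sub>0 nat)" where
  "graft X = (\<Sum>p\<in>Poly_Mapping.keys X. Poly_Mapping.single (fst p, {#Node (snd p)#}) (Poly_Mapping.lookup X p))"

primrec cuts :: "tree \<Rightarrow> (forest \<times> forest \<Rightarrow>\<^sub>0 nat)" where
  "cuts (Node M) = Poly_Mapping.single ({#Node M#}, {#}) 1 + graft (prod_mset (image_mset cuts M))"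

definition DeltaCK :: "(forest \<Rightarrow>\<^sub>0 'k::comm_ring_1) \<Rightarrow> (forest \<times> forest \<Rightarrow>\<^sub>0 'k)" where
  "DeltaCK x = lext (\<lambda>u. of_nat_pm (prod_mset (image_mset cuts u))) x"

text \<open>Subforests of t (sets of vertex-disjoint subtrees with at least one edge, or the trivial
  one) correspond bijectively to subsets of the edge set of t. phi t enumerates them,
  recording (F, R, Q): F the components not containing the root, R the component of the
  root (possibly the single vertex), Q the contracted tree t/s. For each child c of the
  root we either drop or keep the edge from the root to c.\<close>

type_synonym triple = "forest \<times> forest \<times> forest"

definition child_opts :: "(forest \<times> tree \<times> tree \<Rightarrow>\<^sub>0 nat) \<Rightarrow> (triple \<Rightarrow>\<^sub>0 nat)" where
  "child_opts P = (\<Sum>p\<in>Poly_Mapping.keys P. case p of (F, R, Q) \<Rightarrow>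
      Poly_Mapping.single (F + nt R, {#}, {#Q#}) (Poly_Mapping.lookup P p)
    + Poly_Mapping.single (F, {#R#}, children Q) (Poly_Mapping.lookup P p))"

definition close_root :: "(triple \<Rightarrow>\<^sub>0 nat) \<Rightarrow> (forest \<times> tree \<times> tree \<Rightarrow>\<^sub>0 nat)" where
  "close_root X = (\<Sum>p\<in>Poly_Mapping.keys X. case p of (F, RC, QC) \<Rightarrow>
      Poly_Mapping.single (F, Node RC, Node QC) (Poly_Mapping.lookup X p))"

primrec phi :: "tree \<Rightarrow> (forest \<times> tree \<times> tree \<Rightarrow>\<^sub>0 nat)" where
  "phi (Node M) = close_root (prod_mset (image_mset (\<lambda>c. child_opts c) (image_mset phi M)))"

text \<open>Phi(t) = sum over subforests s of s \<otimes> t/s, as element of H \<otimes> H_CK\<close>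
definition Phi_tree :: "tree \<Rightarrow> (forest \<times> forest \<Rightarrow>\<^sub>0 nat)" where
  "Phi_tree t = (\<Sum>p\<in>Poly_Mapping.keys (phi t). case p of (F, R, Q) \<Rightarrow>
      Poly_Mapping.single (F + nt R, {#Q#}) (Poly_Mapping.lookup (phi t) p))"

text \<open>Phi is the algebra morphism extending Phi_tree; Phi(1) = dot \<otimes> 1\<close>
definition Phi :: "(forest \<Rightarrow>\<^sub>0 'k::comm_ring_1) \<Rightarrow> (forest \<times> forest \<Rightarrow>\<^sub>0 'k)" where
  "Phi x = lext (\<lambda>u. of_nat_pm (prod_mset (image_mset Phi_tree u))) x"

definition left_apply :: "(forest \<Rightarrow> 'k::comm_ring_1) \<Rightarrow> (forest \<times> forest \<Rightarrow>\<^sub>0 'k) \<Rightarrow> (forest \<Rightarrow>\<^sub>0 'k)" where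
  "left_apply a X = (\<Sum>p\<in>Poly_Mapping.keys X. Poly_Mapping.single (snd p) (Poly_Mapping.lookup X p * a (fst p)))"

definition tL :: "(forest \<Rightarrow> 'k::comm_ring_1) \<Rightarrow> (forest \<Rightarrow>\<^sub>0 'k) \<Rightarrow> (forest \<Rightarrow>\<^sub>0 'k)" where
  "tL a x = left_apply a (Phi x)"

text \<open>A linear form on H is given by its values on the basis of forests of trees with an edge.\<close>
definition infinitesimal_character :: "(forest \<Rightarrow> 'k::comm_ring_1) \<Rightarrow> bool" where
  "infinitesimal_character a \<longleftrightarrow>
     (\<forall>x\<in>Hset. \<forall>y\<in>Hset. lfun a (x * y) = lfun a x * epsH y + epsH x * lfun a y)"

definition character :: "(forest \<Rightarrow> 'k::comm_ring_1) \<Rightarrow> bool" where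
  "character \<phi> \<longleftrightarrow> lfun \<phi> 1 = 1 \<and>
     (\<forall>x\<in>Hset. \<forall>y\<in>Hset. lfun \<phi> (x * y) = lfun \<phi> x * lfun \<phi> y)"

definition linear_map :: "((forest \<Rightarrow>\<^sub>0 'k::comm_ring_1) \<Rightarrow> (forest \<Rightarrow>\<^sub>0 'k)) \<Rightarrow> bool" where
  "linear_map D \<longleftrightarrow> (\<forall>x y. D (x + y) = D x + D y) \<and> (\<forall>c x. D (smult c x) = smult c (D x))"

definition biderivation :: "((forest \<Rightarrow>\<^sub>0 'k::comm_ring_1) \<Rightarrow> (forest \<Rightarrow>\<^sub>0 'k)) \<Rightarrow> bool" where
  "biderivation D \<longleftrightarrow> linear_map D
     \<and> (\<forall>x y. D (x * y) = D x * y + x * D y)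
     \<and> (\<forall>x. DeltaCK (D x) = tmap D id (DeltaCK x) + tmap id D (DeltaCK x))"

definition hopf_automorphism :: "((forest \<Rightarrow>\<^sub>0 'k::comm_ring_1) \<Rightarrow> (forest \<Rightarrow>\<^sub>0 'k)) \<Rightarrow> bool" where
  "hopf_automorphism L \<longleftrightarrow> linear_map L \<and> bij L
     \<and> L 1 = 1 \<and> (\<forall>x y. L (x * y) = L x * L y)
     \<and> (\<forall>x. DeltaCK (L x) = tmap L L (DeltaCK x))
     \<and> (\<forall>x. epsCK (L x) = epsCK x)"

end

theory Submission
  imports Defs
begin

(* The heart of the argument is the compatibility of contraction with
   admissible cuts,  (Id \<otimes> Delta_CK) \<circ> Phi = m_13 \<circ> (Phi \<otimes> Phi) \<circ> Delta_CK:
   cutting a contracted tree t/s is the same as first cutting t and then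
   contracting a subforest in each of the two parts.  Both sides are
   multiplicative, so it suffices to treat a single tree; there it is proved
   by structural induction, using a refined version of Phi that also records
   the component of the root (Phi_cuts_compat).  Together with the counit
   property (epsilon \<otimes> Id) \<circ> Phi = Id (counit_Phi_forest) it gives the
   coderivation resp. comultiplicativity of tL; multiplicativity of Phi gives
   the derivation resp. algebra morphism property; bijectivity of tL phi
   follows because tL phi u = u + (forests with fewer vertices).

   All combinatorics is carried out with natural-number multiplicities
   (type 'a nm) and transferred to the field only when tL is analysed. *)

abbreviation basis :: "'a \<Rightarrow> ('a \<Rightarrow>\<^sub>0 'k::comm_semiring_1)" where
  "basis b \<equiv> Poly_Mapping.single b 1"

lemma smult_conv: "smult c P = Poly_Mapping.single 0 c * P"
  unfolding smult_def using mult_map_scale_conv_mult[of c P] by (simp add: fun_eq_iff)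

lemma lookup_smult: "Poly_Mapping.lookup (smult c P) k = c * Poly_Mapping.lookup P k"
  unfolding smult_def by transfer (simp add: when_def)

lemma smult_add_left: "smult (a + b) P = smult a P + smult b P"
  by (rule poly_mapping_eqI) (simp add: lookup_smult lookup_add distrib_right)

lemma smult_add_right: "smult c (P + Q) = smult c P + smult c Q"
  by (rule poly_mapping_eqI) (simp add: lookup_smult lookup_add distrib_left)

lemma smult_0_left [simp]: "smult 0 P = 0"
  by (rule poly_mapping_eqI) (simp add: lookup_smult)

lemma smult_0_right [simp]: "smult c 0 = 0"
  by (rule poly_mapping_eqI) (simp add: lookup_smult)

lemma smult_1 [simp]: "smult 1 P = P"
  by (rule poly_mapping_eqI) (simp add: lookup_smult)

lemma smult_smult: "smult a (smult b P) = smult (a * b) P"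
  by (rule poly_mapping_eqI) (simp add: lookup_smult mult.assoc)

lemma smult_single: "smult c (Poly_Mapping.single k v) = Poly_Mapping.single k (c * v)"
  by (rule poly_mapping_eqI) (simp add: lookup_smult lookup_single when_def)

lemma smult_mult_left: "smult c P * Q = smult c (P * Q)"
  by (simp add: smult_conv mult.assoc)

lemma smult_mult_right:
  fixes P Q :: "'a::comm_monoid_add \<Rightarrow>\<^sub>0 'k::comm_semiring_1"
  shows "P * smult c Q = smult c (P * Q)"
  by (simp add: smult_conv mult.left_commute)

lemma smult_sum: "smult c (sum f A) = (\<Sum>x\<in>A. smult c (f x))"
  by (induction A rule: infinite_finite_induct) (simp_all add: smult_add_right)

lemma keys_smult: "Poly_Mapping.keys (smult c P) \<subseteq> Poly_Mapping.keys P"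
  by (auto simp: in_keys_iff lookup_smult)

lemma pm_expand: "(\<Sum>k\<in>Poly_Mapping.keys x. Poly_Mapping.single k (Poly_Mapping.lookup x k)) = x"
  by (rule poly_mapping_eqI) (simp add: lookup_sum lookup_single when_def in_keys_iff)

lemma pm_induct [case_names zero single add]:
  fixes x :: "'a \<Rightarrow>\<^sub>0 'b::comm_monoid_add"
  assumes "P 0" "\<And>k c. P (Poly_Mapping.single k c)" "\<And>x y. P x \<Longrightarrow> P y \<Longrightarrow> P (x + y)"
  shows "P x"
proof -
  have "P (\<Sum>k\<in>K. Poly_Mapping.single k (Poly_Mapping.lookup x k))" if "finite K" for K
    using that by (induction K rule: finite_induct) (auto intro: assms)
  then show ?thesis using pm_expand[of x] by (metis finite_keys)
qed

lemma lext_zero [simp]: "lext f 0 = 0"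
  by (simp add: lext_def)

lemma lext_add: "lext f (X + Y) = lext f X + lext f Y"
  unfolding lext_def
  by (rule setsum_keys_plus_distrib) (simp_all add: lookup_add smult_add_left)

lemma lext_diff:
  fixes X Y :: "'a \<Rightarrow>\<^sub>0 'k::comm_ring_1"
  shows "lext f (X - Y) = lext f X - lext f Y"
  using lext_add[of f "X - Y" Y] by (simp add: eq_diff_eq)

lemma lext_single: "lext f (Poly_Mapping.single p c) = smult c (f p)"
  by (cases "c = 0") (simp_all add: lext_def)

lemma lext_basis [simp]: "lext f (basis p) = f p"
  by (simp add: lext_single)

lemma lext_one: "lext g (1 :: 'a::zero \<Rightarrow>\<^sub>0 'k::comm_semiring_1) = g 0"
  using lext_single[of g 0 1] by simp

lemma lext_smult: "lext f (smult c X) = smult c (lext f X)"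
  by (induction X rule: pm_induct)
    (simp_all add: smult_single lext_single smult_smult lext_add smult_add_right)

lemma lext_cong: "(\<And>p. p \<in> Poly_Mapping.keys X \<Longrightarrow> f p = g p) \<Longrightarrow> lext f X = lext g X"
  by (simp add: lext_def)

lemma lext_delta [simp]: "lext basis X = X"
  by (induction X rule: pm_induct) (simp_all add: lext_add lext_single smult_single)

lemma lext_plus_fun: "lext (\<lambda>p. f p + g p) X = lext f X + lext g X"
  by (induction X rule: pm_induct) (simp_all add: lext_add lext_single smult_add_right add_ac)

lemma lext_plus_cong:
  "(\<And>p. p \<in> Poly_Mapping.keys X \<Longrightarrow> h p = f p + g p) \<Longrightarrow> lext h X = lext f X + lext g X"
  using lext_cong[of X h "\<lambda>p. f p + g p"] lext_plus_fun by metis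

lemma lext_lext: "lext g (lext f X) = lext (\<lambda>p. lext g (f p)) X"
  by (induction X rule: pm_induct) (simp_all add: lext_add lext_single lext_smult)

lemma lookup_lext:
  "Poly_Mapping.lookup (lext d x) k
     = (\<Sum>u\<in>Poly_Mapping.keys x. Poly_Mapping.lookup x u * Poly_Mapping.lookup (d u) k)"
  by (simp add: lext_def lookup_sum lookup_smult)

lemma keys_lext:
  "Poly_Mapping.keys (lext f X) \<subseteq> (\<Union>p\<in>Poly_Mapping.keys X. Poly_Mapping.keys (f p))"
  unfolding lext_def using keys_sum keys_smult by fastforce

lemma keys_lext_ex:
  "k \<in> Poly_Mapping.keys (lext f X) \<Longrightarrow> \<exists>p\<in>Poly_Mapping.keys X. k \<in> Poly_Mapping.keys (f p)"
  using keys_lext by fastforce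

lemma lext_mult_hom2:
  fixes A B :: "'a::comm_monoid_add \<Rightarrow>\<^sub>0 'k::comm_semiring_1"
    and g g1 g2 :: "'a \<Rightarrow> ('b::comm_monoid_add \<Rightarrow>\<^sub>0 'k)"
  assumes "\<And>a b. g (a + b) = g1 a * g2 b"
  shows "lext g (A * B) = lext g1 A * lext g2 B"
proof (induction A rule: pm_induct)
  case (single a c)
  show ?case
  proof (induction B rule: pm_induct)
    case (single b d)
    then show ?case
      by (simp add: mult_single lext_single assms smult_mult_left smult_mult_right smult_smult mult.commute)
  qed (simp_all add: distrib_left lext_add)
qed (simp_all add: distrib_right lext_add)

lemma lext_mult_lext:
  fixes A :: "'a \<Rightarrow>\<^sub>0 'k::comm_semiring_1" and B :: "'c \<Rightarrow>\<^sub>0 'k"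
    and g1 :: "'a \<Rightarrow> ('b::comm_monoid_add \<Rightarrow>\<^sub>0 'k)" and g2 :: "'c \<Rightarrow> ('b \<Rightarrow>\<^sub>0 'k)"
  shows "lext g1 A * lext g2 B = lext (\<lambda>a. lext (\<lambda>b. g1 a * g2 b) B) A"
proof (induction A rule: pm_induct)
  case (single a c)
  show ?case
  proof (induction B rule: pm_induct)
    case (single b d)
    then show ?case
      by (simp add: lext_single smult_mult_left smult_mult_right smult_smult mult.commute)
  qed (simp_all add: distrib_left lext_add lext_plus_fun lext_single smult_add_right)
qed (simp_all add: distrib_right lext_add)

lemma lext_prod_mset:
  fixes g :: "'a::comm_monoid_add \<Rightarrow> ('b::comm_monoid_add \<Rightarrow>\<^sub>0 'k::comm_semiring_1)"
    and h :: "'c \<Rightarrow> ('a \<Rightarrow>\<^sub>0 'k)"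
  assumes "\<And>a b. g (a + b) = g a * g b" "g 0 = 1"
  shows "lext g (prod_mset (image_mset h M)) = prod_mset (image_mset (\<lambda>x. lext g (h x)) M)"
proof -
  have "lext g (A * B) = lext g A * lext g B" for A B
    by (rule lext_mult_hom2) (rule assms(1))
  then show ?thesis by (induction M) (simp_all add: lext_one assms)
qed

lemma mult_expand:
  fixes x y :: "'a::comm_monoid_add \<Rightarrow>\<^sub>0 'k::comm_semiring_1"
  shows "x * y = lext (\<lambda>u. lext (\<lambda>v. basis (u + v)) y) x"
  using lext_mult_lext[of basis x basis y] by (simp add: mult_single)

lemma lext_lext_mult:
  fixes h :: "'a::comm_monoid_add \<Rightarrow> 'b::comm_monoid_add \<Rightarrow> ('c::comm_monoid_add \<Rightarrow>\<^sub>0 'k::comm_semiring_1)"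
  assumes "\<And>a1 a2 b1 b2. h (a1 + a2) (b1 + b2) = h a1 b1 * h a2 b2"
  shows "lext (\<lambda>a. lext (h a) (B1 * B2)) (A1 * A2)
       = lext (\<lambda>a. lext (h a) B1) A1 * lext (\<lambda>a. lext (h a) B2) A2"
  by (rule lext_mult_hom2, rule lext_mult_hom2) (rule assms)

type_synonym 'a nm = "'a \<Rightarrow>\<^sub>0 nat"

abbreviation nbasis :: "'a \<Rightarrow> 'a nm" where
  "nbasis b \<equiv> Poly_Mapping.single b 1"

definition lext_nat :: "('a \<Rightarrow> ('b \<Rightarrow>\<^sub>0 'k::comm_semiring_1)) \<Rightarrow> 'a nm \<Rightarrow> ('b \<Rightarrow>\<^sub>0 'k)" where
  "lext_nat h X = (\<Sum>p\<in>Poly_Mapping.keys X. smult (of_nat (Poly_Mapping.lookup X p)) (h p))"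

lemma lext_nat_zero [simp]: "lext_nat h 0 = 0"
  by (simp add: lext_nat_def)

lemma lext_nat_add: "lext_nat h (X + Y) = lext_nat h X + lext_nat h Y"
  unfolding lext_nat_def
  by (rule setsum_keys_plus_distrib) (simp_all add: lookup_add smult_add_left)

lemma lext_nat_single: "lext_nat h (Poly_Mapping.single p c) = smult (of_nat c) (h p)"
  by (cases "c = 0") (simp_all add: lext_nat_def)

lemma lext_nat_nbasis [simp]: "lext_nat h (nbasis p) = h p"
  by (simp add: lext_nat_single)

text \<open>The simplifier writes the multiplicity \<open>1 :: nat\<close> as \<open>Suc 0\<close>; the following
  variants keep basis vectors recognisable in that form.\<close>

lemma lext_nat_nbasis_Suc [simp]: "lext_nat h (Poly_Mapping.single p (Suc 0)) = h p"
  by (simp add: lext_nat_single)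

lemma lext_nbasis_Suc [simp]: "lext f (Poly_Mapping.single p (Suc 0)) = f p"
  using lext_basis[of f p] by (metis One_nat_def)

lemma single_empty_Suc [simp]:
  "Poly_Mapping.single ({#}::'a multiset) (Suc 0) = 1"
  "Poly_Mapping.single (({#}::'a multiset), ({#}::'b multiset)) (Suc 0) = 1"
  "Poly_Mapping.single (({#}::'a multiset), ({#}::'b multiset), ({#}::'c multiset)) (Suc 0) = 1"
  "Poly_Mapping.single (({#}::'a multiset), ({#}::'b multiset), ({#}::'c multiset), ({#}::'d multiset)) (Suc 0) = 1"
  by (simp_all add: zero_prod_def flip: One_nat_def single_one)

lemma lext_nat_one: "lext_nat h (1 :: 'a::zero nm) = h 0"
  by (metis lext_nat_nbasis single_one)

lemma lext_nat_cong:
  "(\<And>p. p \<in> Poly_Mapping.keys X \<Longrightarrow> f p = g p) \<Longrightarrow> lext_nat f X = lext_nat g X"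
  by (simp add: lext_nat_def)

lemma lext_nat_smult: "lext_nat h (smult c Y) = smult (of_nat c) (lext_nat h Y)"
  by (induction Y rule: pm_induct)
    (simp_all add: smult_single lext_nat_single lext_nat_add smult_add_right smult_smult)

lemma lext_nat_lext: "lext_nat h (lext g X) = lext_nat (\<lambda>p. lext_nat h (g p)) X"
  by (induction X rule: pm_induct)
    (simp_all add: lext_single lext_nat_single lext_nat_add lext_add lext_nat_smult)

lemma lext_lext_nat: "lext g (lext_nat h X) = lext_nat (\<lambda>p. lext g (h p)) X"
  by (induction X rule: pm_induct) (simp_all add: lext_nat_add lext_nat_single lext_add lext_smult)

lemma lext_nat_plus_fun: "lext_nat (\<lambda>p. f p + g p) X = lext_nat f X + lext_nat g X"
  by (induction X rule: pm_induct) (simp_all add: lext_nat_add lext_nat_single smult_add_right add_ac)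

lemma lext_nat_plus_cong:
  "(\<And>p. p \<in> Poly_Mapping.keys X \<Longrightarrow> h p = f p + g p) \<Longrightarrow> lext_nat h X = lext_nat f X + lext_nat g X"
  using lext_nat_cong[of X h "\<lambda>p. f p + g p"] lext_nat_plus_fun by metis

lemma lext_nat_smult_fun: "lext_nat (\<lambda>p. smult c (f p)) X = smult c (lext_nat f X)"
  by (induction X rule: pm_induct)
    (simp_all add: lext_nat_add lext_nat_single smult_add_right smult_smult mult.commute)

lemma lext_nat_if_const: "lext_nat (\<lambda>q. if c then G q else 0) X = (if c then lext_nat G X else 0)"
  by (cases c) (simp_all add: lext_nat_def)

lemma lext_nat_mult_right: "lext_nat h X * P = lext_nat (\<lambda>p. h p * P) X"
  by (induction X rule: pm_induct)
    (simp_all add: lext_nat_add lext_nat_single distrib_right smult_mult_left)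

lemma lext_nat_mult_left:
  fixes P :: "'b::comm_monoid_add \<Rightarrow>\<^sub>0 'k::comm_semiring_1"
  shows "P * lext_nat h X = lext_nat (\<lambda>p. P * h p) X"
  by (induction X rule: pm_induct)
    (simp_all add: lext_nat_add lext_nat_single distrib_left smult_mult_right)

lemma lext_nat_mult_expand:
  fixes A B :: "'a::comm_monoid_add nm"
  shows "lext_nat h (A * B) = lext_nat (\<lambda>a. lext_nat (\<lambda>b. h (a + b)) B) A"
  unfolding mult_expand[of A B] by (simp add: lext_nat_lext)

lemma lext_nat_mult_lext_nat:
  fixes h1 :: "'a \<Rightarrow> ('b::comm_monoid_add \<Rightarrow>\<^sub>0 'k::comm_semiring_1)"
  shows "lext_nat h1 A * lext_nat h2 B = lext_nat (\<lambda>a. lext_nat (\<lambda>b. h1 a * h2 b) B) A"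
  by (subst lext_nat_mult_right) (simp add: lext_nat_mult_left)

lemma keys_lext_nat:
  "Poly_Mapping.keys (lext_nat h X) \<subseteq> (\<Union>p\<in>Poly_Mapping.keys X. Poly_Mapping.keys (h p))"
  unfolding lext_nat_def using keys_sum keys_smult by fastforce

lemma lookup_lext_nat:
  "Poly_Mapping.lookup (lext_nat h X) k
     = (\<Sum>p\<in>Poly_Mapping.keys X. of_nat (Poly_Mapping.lookup X p) * Poly_Mapping.lookup (h p) k)"
  by (simp add: lext_nat_def lookup_sum lookup_smult)

lemma lext_of_nat_pm: "lext f (of_nat_pm X :: 'a \<Rightarrow>\<^sub>0 'k::comm_semiring_1) = lext_nat f X"
proof (induction X rule: pm_induct)
  case zero
  have "Poly_Mapping.map of_nat (0::'a nm) = (0 :: 'a \<Rightarrow>\<^sub>0 'k)"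
    by (simp only: map_eq_zero_iff) simp
  then show ?case by (simp add: of_nat_pm_def)
next
  case (single k c)
  then show ?case by (simp add: of_nat_pm_def lext_single lext_nat_single)
next
  case (add x y)
  have "of_nat_pm (x + y) = (of_nat_pm x + of_nat_pm y :: 'a \<Rightarrow>\<^sub>0 'k)"
    by (rule poly_mapping_eqI) (simp add: of_nat_pm_def lookup_add Poly_Mapping.map.rep_eq when_def)
  then show ?case using add by (simp add: lext_add lext_nat_add)
qed

lemma of_nat_pm_lext_nat: "of_nat_pm X = (lext_nat basis X :: 'a \<Rightarrow>\<^sub>0 'k::comm_semiring_1)"
  using lext_of_nat_pm[of basis X] by simp

definition cuts_forest :: "forest \<Rightarrow> (forest \<times> forest) nm" where
  "cuts_forest u = prod_mset (image_mset cuts u)"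

definition Phi_forest :: "forest \<Rightarrow> (forest \<times> forest) nm" where
  "Phi_forest u = prod_mset (image_mset Phi_tree u)"

definition root_opts :: "forest \<Rightarrow> triple nm" where
  "root_opts u = prod_mset (image_mset (\<lambda>w. child_opts (phi w)) u)"

lemma cuts_forest_simps [simp]:
  "cuts_forest {#} = 1" "cuts_forest (u + v) = cuts_forest u * cuts_forest v"
  "cuts_forest {#t#} = cuts t"
  by (simp_all add: cuts_forest_def)

lemma Phi_forest_simps [simp]:
  "Phi_forest {#} = 1" "Phi_forest (u + v) = Phi_forest u * Phi_forest v"
  "Phi_forest {#t#} = Phi_tree t"
  by (simp_all add: Phi_forest_def)

lemma root_opts_simps [simp]:
  "root_opts {#} = 1" "root_opts (u + v) = root_opts u * root_opts v"
  "root_opts {#t#} = child_opts (phi t)"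
  by (simp_all add: root_opts_def)

lemma sum_single_lext:
  "(\<Sum>p\<in>Poly_Mapping.keys X. Poly_Mapping.single (f p) (Poly_Mapping.lookup X p))
     = lext (\<lambda>p. nbasis (f p)) X"
  unfolding lext_def by (rule sum.cong) (simp_all add: smult_single)

lemma close_root_lext: "close_root X = lext (\<lambda>(F,RC,QC). nbasis (F, Node RC, Node QC)) X"
  unfolding close_root_def lext_def by (rule sum.cong) (auto simp: smult_single split: prod.split)

lemma child_opts_lext:
  "child_opts P = lext (\<lambda>(F,R,Q). nbasis (F + nt R, {#}, {#Q#}) + nbasis (F, {#R#}, children Q)) P"
  unfolding child_opts_def lext_def
  by (rule sum.cong) (auto simp: smult_single smult_add_right split: prod.split)

lemma Phi_tree_lext: "Phi_tree t = lext (\<lambda>(F,R,Q). nbasis (F + nt R, {#Q#})) (phi t)"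
  unfolding Phi_tree_def lext_def by (rule sum.cong) (auto simp: smult_single split: prod.split)

lemma cuts_alt:
  "cuts Q = nbasis ({#Q#},{#}) + lext (\<lambda>(V,W). nbasis (V, {#Node W#})) (cuts_forest (children Q))"
proof (cases Q)
  case (Node M)
  have "graft X = lext (\<lambda>(V,W). nbasis (V, {#Node W#})) X" for X
    unfolding graft_def sum_single_lext by (simp add: split_def)
  then show ?thesis by (simp add: Node cuts_forest_def)
qed

lemma phi_Node: "phi (Node W) = lext (\<lambda>(F,RC,QC). nbasis (F, Node RC, Node QC)) (root_opts W)"
  by (simp add: root_opts_def close_root_lext multiset.map_comp comp_def)

section \<open>Contraction commutes with cutting\<close>

text \<open>For a tree \<open>c\<close> we compare two ways of producing quadruples \<open>(F, R, V, W)\<close>: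
  \<open>F\<close> and \<open>R\<close> are the non-root components and the root component of a subforest,
  and \<open>(V, Node W)\<close> is a cut keeping the root, with pruned part \<open>V\<close> and trunk
  \<open>Node W\<close>.  Either we contract a subforest of \<open>c\<close> and cut the quotient below its
  root, or we cut \<open>c\<close> below its root and contract subforests of the pruned part
  and of the trunk.\<close>

definition contract_then_cut :: "tree \<Rightarrow> (forest \<times> tree \<times> forest \<times> forest) nm" where
  "contract_then_cut c =
     lext (\<lambda>(F,R,Q). lext (\<lambda>(V,W). nbasis (F,R,V,W)) (cuts_forest (children Q))) (phi c)"

definition cut_then_contract :: "tree \<Rightarrow> (forest \<times> tree \<times> forest \<times> forest) nm" where
  "cut_then_contract c =
     lext (\<lambda>(V,W). lext (\<lambda>(Fv,Qv). lext (\<lambda>(F',R',Q'). nbasis (Fv + F', R', Qv, children Q'))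
       (phi (Node W))) (Phi_forest V)) (cuts_forest (children c))"

definition close_root4 :: "forest \<times> forest \<times> forest \<times> forest \<Rightarrow> (forest \<times> tree \<times> forest \<times> forest) nm" where
  "close_root4 = (\<lambda>(F,RC,V,W). nbasis (F, Node RC, V, W))"

definition cut_quotient_children :: "triple \<Rightarrow> (forest \<times> forest \<times> forest \<times> forest) nm" where
  "cut_quotient_children = (\<lambda>(F,RC,QC). lext (\<lambda>(V,W). nbasis (F,RC,V,W)) (cuts_forest QC))"

definition contract_cut_parts :: "forest \<times> forest \<Rightarrow> (forest \<times> forest \<times> forest \<times> forest) nm" where
  "contract_cut_parts = (\<lambda>(V,W). lext (\<lambda>(Fv,Qv). lext (\<lambda>(F',RC',QC'). nbasis (Fv + F', RC', Qv, QC'))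
     (root_opts W)) (Phi_forest V))"

definition child_contract_then_cut :: "tree \<Rightarrow> (forest \<times> forest \<times> forest \<times> forest) nm" where
  "child_contract_then_cut c = lext cut_quotient_children (child_opts (phi c))"

definition child_cut_then_contract :: "tree \<Rightarrow> (forest \<times> forest \<times> forest \<times> forest) nm" where
  "child_cut_then_contract c = lext contract_cut_parts (cuts c)"

lemma cut_quotient_children_mult:
  "cut_quotient_children (x + y) = cut_quotient_children x * cut_quotient_children y"
proof -
  obtain F1 R1 Q1 F2 R2 Q2 where x: "x = (F1,R1,Q1)" and y: "y = (F2,R2,Q2)"
    by (cases x, cases y) auto
  show ?thesis unfolding x y cut_quotient_children_def
    by (simp, rule lext_mult_hom2) (auto simp: mult_single)
qed

lemma cut_quotient_children_0: "cut_quotient_children 0 = 1"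
  by (simp add: cut_quotient_children_def zero_prod_def lext_one[simplified zero_prod_def])

lemma contract_cut_parts_mult:
  "contract_cut_parts (x + y) = contract_cut_parts x * contract_cut_parts y"
proof -
  obtain V1 W1 V2 W2 where xy: "x = (V1,W1)" "y = (V2,W2)" by (cases x, cases y) auto
  define h :: "forest \<times> forest \<Rightarrow> triple \<Rightarrow> (forest \<times> forest \<times> forest \<times> forest) nm" where
    "h = (\<lambda>(Fv,Qv) (F',RC',QC'). nbasis (Fv + F', RC', Qv, QC'))"
  have h: "h (a1 + a2) (b1 + b2) = h a1 b1 * h a2 b2" for a1 a2 b1 b2
    by (cases a1, cases a2, cases b1, cases b2) (simp add: h_def mult_single add_ac)
  have "contract_cut_parts (V,W) = lext (\<lambda>a. lext (h a) (root_opts W)) (Phi_forest V)" for V W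
    by (simp add: contract_cut_parts_def h_def split_def)
  then show ?thesis
    using lext_lext_mult[of h, OF h] by (simp add: xy)
qed

lemma contract_cut_parts_0: "contract_cut_parts 0 = 1"
  by (simp add: contract_cut_parts_def zero_prod_def lext_one[simplified zero_prod_def])

lemma contract_then_cut_Node:
  "contract_then_cut (Node M) = lext close_root4 (prod_mset (image_mset child_contract_then_cut M))"
proof -
  have "contract_then_cut (Node M) = lext (\<lambda>p. lext close_root4 (cut_quotient_children p)) (root_opts M)"
    unfolding contract_then_cut_def phi_Node lext_lext
    by (rule lext_cong)
      (auto simp: cut_quotient_children_def close_root4_def lext_lext split: prod.split intro!: lext_cong)
  also have "\<dots> = lext close_root4 (lext cut_quotient_children (root_opts M))"
    by (simp add: lext_lext)
  also have "lext cut_quotient_children (root_opts M) = prod_mset (image_mset child_contract_then_cut M)"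
    unfolding root_opts_def child_contract_then_cut_def
    by (simp add: lext_prod_mset cut_quotient_children_mult cut_quotient_children_0)
  finally show ?thesis .
qed

lemma cut_then_contract_Node:
  "cut_then_contract (Node M) = lext close_root4 (prod_mset (image_mset child_cut_then_contract M))"
proof -
  have "cut_then_contract (Node M) = lext (\<lambda>p. lext close_root4 (contract_cut_parts p)) (cuts_forest M)"
    unfolding cut_then_contract_def tree.sel
    by (rule lext_cong) (auto simp: contract_cut_parts_def close_root4_def lext_lext phi_Node
        simp del: phi.simps split: prod.split intro!: lext_cong)
  also have "\<dots> = lext close_root4 (lext contract_cut_parts (cuts_forest M))"
    by (simp add: lext_lext)
  also have "lext contract_cut_parts (cuts_forest M) = prod_mset (image_mset child_cut_then_contract M)"
    unfolding cuts_forest_def child_cut_then_contract_def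
    by (simp add: lext_prod_mset contract_cut_parts_mult contract_cut_parts_0)
  finally show ?thesis .
qed

text \<open>The contribution of a child splits into three parts: the whole child is cut
  off; or only part of it is cut off, and the edge from the root to the child is
  dropped from resp. kept in the subforest.\<close>

definition whole_child_cut :: "tree \<Rightarrow> (forest \<times> forest \<times> forest \<times> forest) nm" where
  "whole_child_cut c = lext (\<lambda>(F,R,Q). nbasis (F + nt R, {#}, {#Q#}, {#})) (phi c)"

definition drop_root_edge :: "forest \<times> tree \<times> forest \<times> forest \<Rightarrow> (forest \<times> forest \<times> forest \<times> forest) nm" where
  "drop_root_edge = (\<lambda>(F,R,V,W). nbasis (F + nt R, {#}, V, {#Node W#}))"

definition keep_root_edge :: "forest \<times> tree \<times> forest \<times> forest \<Rightarrow> (forest \<times> forest \<times> forest \<times> forest) nm" where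
  "keep_root_edge = (\<lambda>(F,R,V,W). nbasis (F, {#R#}, V, W))"

lemma child_contract_then_cut_expand:
  "child_contract_then_cut c
     = whole_child_cut c + lext drop_root_edge (contract_then_cut c) + lext keep_root_edge (contract_then_cut c)"
proof -
  have "child_contract_then_cut c = lext (\<lambda>p. lext cut_quotient_children
      (case p of (F,R,Q) \<Rightarrow> nbasis (F + nt R, {#}, {#Q#}) + nbasis (F, {#R#}, children Q))) (phi c)"
    unfolding child_contract_then_cut_def child_opts_lext lext_lext ..
  also have "\<dots> = lext (\<lambda>p. (case p of (F,R,Q) \<Rightarrow> nbasis (F + nt R, {#}, {#Q#}, {#}))
      + (case p of (F,R,Q) \<Rightarrow> lext (\<lambda>(V,W). drop_root_edge (F,R,V,W)) (cuts_forest (children Q)))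
      + (case p of (F,R,Q) \<Rightarrow> lext (\<lambda>(V,W). keep_root_edge (F,R,V,W)) (cuts_forest (children Q)))) (phi c)"
    by (rule lext_cong) (auto simp: lext_add cut_quotient_children_def drop_root_edge_def
        keep_root_edge_def cuts_alt lext_lext split: prod.split intro!: lext_cong)
  also have "\<dots> = whole_child_cut c + lext drop_root_edge (contract_then_cut c)
      + lext keep_root_edge (contract_then_cut c)"
    unfolding whole_child_cut_def contract_then_cut_def lext_lext lext_plus_fun
    by (intro arg_cong2[where f="(+)"] lext_cong refl)
      (auto simp: lext_lext split: prod.split intro!: lext_cong)
  finally show ?thesis .
qed

lemma contract_cut_parts_root: "contract_cut_parts ({#c#}, {#}) = whole_child_cut c"
proof -
  have one: "lext g (1 :: triple nm) = g ({#},{#},{#})"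
    for g :: "triple \<Rightarrow> (forest \<times> forest \<times> forest \<times> forest) nm"
    using lext_one[of g] by (simp add: zero_prod_def)
  show ?thesis
    unfolding contract_cut_parts_def whole_child_cut_def Phi_forest_simps root_opts_simps Phi_tree_lext
    by (auto simp: lext_lext one Phi_tree_lext split: prod.split intro!: lext_cong)
qed

text \<open>When the trunk is \<open>Node W\<close>, contracting it splits according to whether the
  edge from its root to the root of \<open>W\<close>'s component is kept.\<close>

definition cut_parts_drop :: "forest \<Rightarrow> forest \<Rightarrow> (forest \<times> forest \<times> forest \<times> forest) nm" where
  "cut_parts_drop V W = lext (\<lambda>(Fv,Qv). lext (\<lambda>(F',R',Q'). drop_root_edge (Fv + F', R', Qv, children Q'))
     (phi (Node W))) (Phi_forest V)"

definition cut_parts_keep :: "forest \<Rightarrow> forest \<Rightarrow> (forest \<times> forest \<times> forest \<times> forest) nm" where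
  "cut_parts_keep V W = lext (\<lambda>(Fv,Qv). lext (\<lambda>(F',R',Q'). keep_root_edge (Fv + F', R', Qv, children Q'))
     (phi (Node W))) (Phi_forest V)"

lemma contract_cut_parts_graft:
  "contract_cut_parts (V, {#Node W#}) = cut_parts_drop V W + cut_parts_keep V W"
proof -
  have "contract_cut_parts (V, {#Node W#}) = lext (\<lambda>(Fv,Qv). lext (\<lambda>(F',R',Q').
      drop_root_edge (Fv + F', R', Qv, children Q') + keep_root_edge (Fv + F', R', Qv, children Q'))
      (phi (Node W))) (Phi_forest V)"
    unfolding contract_cut_parts_def root_opts_simps child_opts_lext
    by (auto simp: child_opts_lext lext_lext lext_add drop_root_edge_def keep_root_edge_def add.assoc
        simp del: phi.simps split: prod.split intro!: lext_cong)
  also have "\<dots> = cut_parts_drop V W + cut_parts_keep V W"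
    unfolding cut_parts_drop_def cut_parts_keep_def
    by (rule lext_plus_cong) (auto split: prod.split intro!: lext_plus_cong)
  finally show ?thesis .
qed

lemma child_cut_then_contract_expand:
  "child_cut_then_contract c
     = whole_child_cut c + lext drop_root_edge (cut_then_contract c) + lext keep_root_edge (cut_then_contract c)"
proof -
  let ?C = "cuts_forest (children c)"
  have "child_cut_then_contract c
      = whole_child_cut c + lext (\<lambda>(V,W). contract_cut_parts (V, {#Node W#})) ?C"
    unfolding child_cut_then_contract_def cuts_alt[of c] lext_add lext_lext
    by (simp add: contract_cut_parts_root split_def)
  also have "lext (\<lambda>(V,W). contract_cut_parts (V, {#Node W#})) ?C
      = lext (\<lambda>(V,W). cut_parts_drop V W) ?C + lext (\<lambda>(V,W). cut_parts_keep V W) ?C"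
    by (rule lext_plus_cong) (auto simp: contract_cut_parts_graft)
  also have "lext (\<lambda>(V,W). cut_parts_drop V W) ?C = lext drop_root_edge (cut_then_contract c)"
    unfolding cut_then_contract_def cut_parts_drop_def lext_lext
    by (auto simp: lext_lext simp del: phi.simps split: prod.split intro!: lext_cong)
  also have "lext (\<lambda>(V,W). cut_parts_keep V W) ?C = lext keep_root_edge (cut_then_contract c)"
    unfolding cut_then_contract_def cut_parts_keep_def lext_lext
    by (auto simp: lext_lext simp del: phi.simps split: prod.split intro!: lext_cong)
  finally show ?thesis by (simp add: add.assoc)
qed

theorem contract_cut_commute: "contract_then_cut c = cut_then_contract c"
proof (induction c)
  case (Node M)
  have "child_contract_then_cut c = child_cut_then_contract c" if "c \<in># M" for c
    using Node[OF that] by (simp add: child_contract_then_cut_expand child_cut_then_contract_expand)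
  then have "image_mset child_contract_then_cut M = image_mset child_cut_then_contract M"
    by (rule image_mset_cong)
  then show ?case by (simp add: contract_then_cut_Node cut_then_contract_Node)
qed

text \<open>On a basis element \<open>S \<otimes> Q\<close> of \<open>H \<otimes> H_CK\<close>, \<open>cut_after_Phi\<close> applies the
  coproduct to \<open>Q\<close>; on a basis element \<open>V \<otimes> W\<close> of \<open>H_CK \<otimes> H_CK\<close>,
  \<open>Phi_after_cut\<close> applies \<open>Phi \<otimes> Phi\<close> and multiplies the two \<open>H\<close>-factors.\<close>

definition cut_after_Phi :: "forest \<times> forest \<Rightarrow> (forest \<times> forest \<times> forest) nm" where
  "cut_after_Phi = (\<lambda>(S,Q). lext (\<lambda>(V,W). nbasis (S,V,W)) (cuts_forest Q))"

definition Phi_after_cut :: "forest \<times> forest \<Rightarrow> (forest \<times> forest \<times> forest) nm" where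
  "Phi_after_cut = (\<lambda>(V,W). lext (\<lambda>(Fv,Qv). lext (\<lambda>(Fw,Qw). nbasis (Fv + Fw, Qv, Qw))
     (Phi_forest W)) (Phi_forest V))"

lemma cut_after_Phi_mult: "cut_after_Phi (x + y) = cut_after_Phi x * cut_after_Phi y"
proof -
  obtain S1 Q1 S2 Q2 where x: "x = (S1,Q1)" and y: "y = (S2,Q2)" by (cases x, cases y) auto
  show ?thesis unfolding x y cut_after_Phi_def
    by (simp, rule lext_mult_hom2) (auto simp: mult_single)
qed

lemma cut_after_Phi_0: "cut_after_Phi 0 = 1"
  by (simp add: cut_after_Phi_def zero_prod_def lext_one[simplified zero_prod_def])

lemma Phi_after_cut_mult: "Phi_after_cut (x + y) = Phi_after_cut x * Phi_after_cut y"
proof -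
  obtain V1 W1 V2 W2 where xy: "x = (V1,W1)" "y = (V2,W2)" by (cases x, cases y) auto
  define h :: "forest \<times> forest \<Rightarrow> forest \<times> forest \<Rightarrow> (forest \<times> forest \<times> forest) nm" where
    "h = (\<lambda>(Fv,Qv) (Fw,Qw). nbasis (Fv + Fw, Qv, Qw))"
  have h: "h (a1 + a2) (b1 + b2) = h a1 b1 * h a2 b2" for a1 a2 b1 b2
    by (cases a1, cases a2, cases b1, cases b2) (simp add: h_def mult_single add_ac)
  have "Phi_after_cut (V,W) = lext (\<lambda>a. lext (h a) (Phi_forest W)) (Phi_forest V)" for V W
    by (simp add: Phi_after_cut_def h_def split_def)
  then show ?thesis
    using lext_lext_mult[of h, OF h] by (simp add: xy)
qed

lemma Phi_after_cut_0: "Phi_after_cut 0 = 1"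
  by (simp add: Phi_after_cut_def zero_prod_def lext_one[simplified zero_prod_def])

text \<open>For a single tree both sides split into the trivial cut and the cuts keeping
  the root, which are the two enumerations of \<open>contract_cut_commute\<close>.\<close>

definition uncut_term :: "tree \<Rightarrow> (forest \<times> forest \<times> forest) nm" where
  "uncut_term t = lext (\<lambda>(F,R,Q). nbasis (F + nt R, {#Q#}, {#})) (phi t)"

definition close_quotient :: "forest \<times> tree \<times> forest \<times> forest \<Rightarrow> (forest \<times> forest \<times> forest) nm" where
  "close_quotient = (\<lambda>(F,R,V,W). nbasis (F + nt R, V, {#Node W#}))"

lemma cut_after_Phi_tree:
  "lext cut_after_Phi (Phi_tree t) = uncut_term t + lext close_quotient (contract_then_cut t)"
proof -
  have "lext cut_after_Phi (Phi_tree t) = lext (\<lambda>p. (case p of (F,R,Q) \<Rightarrow> nbasis (F + nt R, {#Q#}, {#}))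
     + (case p of (F,R,Q) \<Rightarrow> lext (\<lambda>(V,W). close_quotient (F,R,V,W)) (cuts_forest (children Q)))) (phi t)"
    unfolding Phi_tree_lext lext_lext
    by (rule lext_cong) (auto simp: lext_add cut_after_Phi_def close_quotient_def cuts_alt lext_lext
        split: prod.split intro!: lext_cong)
  also have "\<dots> = uncut_term t + lext close_quotient (contract_then_cut t)"
    unfolding uncut_term_def contract_then_cut_def lext_lext lext_plus_fun
    by (intro arg_cong2[where f="(+)"] lext_cong refl)
      (auto simp: lext_lext split: prod.split intro!: lext_cong)
  finally show ?thesis .
qed

lemma Phi_after_cut_tree:
  "lext Phi_after_cut (cuts t) = uncut_term t + lext close_quotient (cut_then_contract t)"
proof -
  have one: "lext g (1 :: (forest \<times> forest) nm) = g ({#},{#})"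
    for g :: "forest \<times> forest \<Rightarrow> (forest \<times> forest \<times> forest) nm"
    using lext_one[of g] by (simp add: zero_prod_def)
  have whole: "Phi_after_cut ({#t#}, {#}) = uncut_term t"
    unfolding Phi_after_cut_def uncut_term_def
    by (auto simp: lext_lext one Phi_tree_lext split: prod.split intro!: lext_cong)
  have "lext Phi_after_cut (cuts t)
      = uncut_term t + lext (\<lambda>(V,W). Phi_after_cut (V, {#Node W#})) (cuts_forest (children t))"
    unfolding cuts_alt[of t] lext_add lext_lext by (simp add: whole split_def)
  also have "lext (\<lambda>(V,W). Phi_after_cut (V, {#Node W#})) (cuts_forest (children t))
      = lext close_quotient (cut_then_contract t)"
    unfolding cut_then_contract_def Phi_after_cut_def lext_lext
    by (auto simp: lext_lext Phi_tree_lext close_quotient_def add.assoc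
        simp del: phi.simps split: prod.split intro!: lext_cong)
  finally show ?thesis .
qed

text \<open>The main combinatorial identity
  \<open>(Id \<otimes> Delta_CK) \<circ> Phi = m_13 \<circ> (Phi \<otimes> Phi) \<circ> Delta_CK\<close> on forests.\<close>

theorem Phi_cuts_compat: "lext cut_after_Phi (Phi_forest u) = lext Phi_after_cut (cuts_forest u)"
proof -
  have "lext cut_after_Phi (Phi_forest u) = prod_mset (image_mset (\<lambda>t. lext cut_after_Phi (Phi_tree t)) u)"
    unfolding Phi_forest_def by (rule lext_prod_mset) (simp_all add: cut_after_Phi_mult cut_after_Phi_0)
  also have "\<dots> = prod_mset (image_mset (\<lambda>t. lext Phi_after_cut (cuts t)) u)"
    by (simp add: cut_after_Phi_tree Phi_after_cut_tree contract_cut_commute)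
  also have "\<dots> = lext Phi_after_cut (cuts_forest u)"
    unfolding cuts_forest_def
    by (rule lext_prod_mset[symmetric]) (simp_all add: Phi_after_cut_mult Phi_after_cut_0)
  finally show ?thesis .
qed

section \<open>The counit property of contraction\<close>

text \<open>Only the trivial subforest has an empty \<open>H\<close>-part, and it leaves the tree
  unchanged: \<open>(epsilon \<otimes> Id) \<circ> Phi = Id\<close>.\<close>

lemma nt_empty_iff: "nt R = {#} \<longleftrightarrow> R = dot"
  by (simp add: nt_def has_edge_def)

lemma prod_nbasis_single: "prod_mset (image_mset (\<lambda>t. nbasis {#t#}) u) = nbasis u"
  by (induction u) (simp_all add: mult_single)

definition counit_phi_term :: "forest \<times> tree \<times> tree \<Rightarrow> forest nm" where
  "counit_phi_term = (\<lambda>(F,R,Q). if F = {#} \<and> R = dot then nbasis {#Q#} else 0)"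

definition counit_opt :: "triple \<Rightarrow> forest nm" where
  "counit_opt = (\<lambda>(F,RC,QC). if F = {#} \<and> RC = {#} then nbasis QC else 0)"

lemma counit_opt_mult: "counit_opt (x + y) = counit_opt x * counit_opt y"
  by (cases x; cases y) (auto simp: counit_opt_def mult_single)

lemma counit_opt_0: "counit_opt 0 = 1"
  by (simp add: counit_opt_def zero_prod_def)

lemma counit_phi: "lext counit_phi_term (phi t) = nbasis {#t#}"
proof (induction t)
  case (Node M)
  have child: "lext counit_opt (child_opts (phi c)) = nbasis {#c#}" if "c \<in># M" for c
  proof -
    have "lext counit_opt (child_opts (phi c)) = lext counit_phi_term (phi c)"
      unfolding child_opts_lext lext_lext
      by (rule lext_cong)
        (auto simp: counit_phi_term_def counit_opt_def lext_add nt_empty_iff split: prod.split)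
    then show ?thesis using Node[OF that] by simp
  qed
  have "lext counit_opt (root_opts M) = prod_mset (image_mset (\<lambda>c. lext counit_opt (child_opts (phi c))) M)"
    unfolding root_opts_def by (rule lext_prod_mset) (simp_all add: counit_opt_mult counit_opt_0)
  also have "\<dots> = prod_mset (image_mset (\<lambda>c. nbasis {#c#}) M)"
    using child by (simp cong: image_mset_cong)
  also have "\<dots> = nbasis M" by (rule prod_nbasis_single)
  finally have opts: "lext counit_opt (root_opts M) = nbasis M" .
  have "lext counit_phi_term (phi (Node M)) = lext (\<lambda>QC. nbasis {#Node QC#}) (lext counit_opt (root_opts M))"
    unfolding phi_Node lext_lext
    by (rule lext_cong) (auto simp: counit_phi_term_def counit_opt_def split: prod.split)
  then show ?case using opts by simp
qed

definition counit_Phi_term :: "forest \<times> forest \<Rightarrow> forest nm" where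
  "counit_Phi_term = (\<lambda>(S,Q). if S = {#} then nbasis Q else 0)"

lemma counit_Phi_term_mult: "counit_Phi_term (x + y) = counit_Phi_term x * counit_Phi_term y"
  by (cases x; cases y) (auto simp: counit_Phi_term_def mult_single)

lemma counit_Phi_term_0: "counit_Phi_term 0 = 1"
  by (simp add: counit_Phi_term_def zero_prod_def)

lemma counit_Phi_term_forest: "lext counit_Phi_term (Phi_forest u) = nbasis u"
proof -
  have tree: "lext counit_Phi_term (Phi_tree t) = nbasis {#t#}" for t
  proof -
    have "lext counit_Phi_term (Phi_tree t) = lext counit_phi_term (phi t)"
      unfolding Phi_tree_lext lext_lext
      by (rule lext_cong) (auto simp: counit_phi_term_def counit_Phi_term_def nt_empty_iff split: prod.split)
    then show ?thesis by (simp add: counit_phi)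
  qed
  have "lext counit_Phi_term (Phi_forest u) = prod_mset (image_mset (\<lambda>t. lext counit_Phi_term (Phi_tree t)) u)"
    unfolding Phi_forest_def
    by (rule lext_prod_mset) (simp_all add: counit_Phi_term_mult counit_Phi_term_0)
  then show ?thesis using prod_nbasis_single[of u] by (simp add: tree)
qed

theorem counit_Phi_forest:
  "lext_nat (\<lambda>p. if fst p = {#} then g (snd p) else 0) (Phi_forest u) = g u"
proof -
  have "lext_nat (\<lambda>p. if fst p = {#} then g (snd p) else 0) (Phi_forest u)
      = lext_nat g (lext counit_Phi_term (Phi_forest u))"
    unfolding lext_nat_lext by (rule lext_nat_cong) (simp add: counit_Phi_term_def split_def)
  then show ?thesis by (simp add: counit_Phi_term_forest)
qed

section \<open>Grading: contraction removes vertices\<close>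

text \<open>Every pair \<open>(S, Q)\<close> in \<open>Phi u\<close> satisfies: the components of \<open>S\<close> have edges,
  \<open>Q\<close> has as many trees as \<open>u\<close>, and the vertices of \<open>Q\<close> plus the edges of \<open>S\<close>
  are the vertices of \<open>u\<close>.  So \<open>Q\<close> has fewer vertices than \<open>u\<close> unless \<open>S\<close> is
  trivial.\<close>

primrec tree_size :: "tree \<Rightarrow> nat" where
  "tree_size (Node M) = Suc (sum_mset (image_mset tree_size M))"

definition forest_size :: "forest \<Rightarrow> nat" where
  "forest_size F = sum_mset (image_mset tree_size F)"

definition forest_edges :: "forest \<Rightarrow> nat" where
  "forest_edges F = sum_mset (image_mset (\<lambda>x. tree_size x - 1) F)"

definition trivial_count :: "forest \<Rightarrow> nat" where
  "trivial_count F = size (filter_mset (\<lambda>x. \<not> has_edge x) F)"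

lemma forest_size_simps [simp]:
  "forest_size {#} = 0" "forest_size (F + G) = forest_size F + forest_size G"
  "forest_size {#x#} = tree_size x"
  by (simp_all add: forest_size_def)

lemma forest_edges_simps [simp]:
  "forest_edges {#} = 0" "forest_edges (F + G) = forest_edges F + forest_edges G"
  by (simp_all add: forest_edges_def)

lemma trivial_count_simps [simp]:
  "trivial_count {#} = 0" "trivial_count (F + G) = trivial_count F + trivial_count G"
  by (simp_all add: trivial_count_def)

lemma tree_size_pos: "tree_size t \<ge> 1"
  by (cases t) simp

lemma tree_size_children: "tree_size Q = Suc (forest_size (children Q))"
  by (cases Q) (simp add: forest_size_def)

lemma forest_edges_nt: "forest_edges (nt R) = tree_size R - 1"
  by (cases R) (auto simp: nt_def has_edge_def forest_edges_def)

lemma trivial_count_nt: "trivial_count (nt R) = 0"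
  by (simp add: nt_def trivial_count_def)

lemma trivial_count_0_iff: "trivial_count F = 0 \<longleftrightarrow> (\<forall>x\<in>#F. has_edge x)"
  by (auto simp: trivial_count_def filter_mset_eq_conv)

lemma forest_edges_pos:
  assumes "\<forall>x\<in>#S. has_edge x" and "S \<noteq> {#}"
  shows "forest_edges S \<ge> 1"
proof -
  obtain x S' where S: "S = add_mset x S'" using assms(2) by (cases S) auto
  then obtain M where x: "x = Node M" "M \<noteq> {#}"
    using assms(1) by (cases x) (auto simp: has_edge_def)
  then obtain y M' where "M = add_mset y M'" by (cases M) auto
  then have "tree_size x \<ge> 2" using x tree_size_pos[of y] by simp
  then show ?thesis using S by (simp add: forest_edges_def)
qed

lemma keys_prod_weight:
  fixes w :: "'a::comm_monoid_add \<Rightarrow> nat" and h :: "'c \<Rightarrow> 'a nm"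
  assumes w_add: "\<And>a b. w (a + b) = w a + w b" and w_0: "w 0 = 0"
    and w_factor: "\<And>x k. x \<in># M \<Longrightarrow> k \<in> Poly_Mapping.keys (h x) \<Longrightarrow> w k = c x"
    and k: "k \<in> Poly_Mapping.keys (prod_mset (image_mset h M))"
  shows "w k = sum_mset (image_mset c M)"
  using w_factor k
proof (induction M arbitrary: k)
  case empty
  then show ?case using w_0 by simp
next
  case (add x M)
  from add.prems(2) obtain a b where "k = a + b" and a: "a \<in> Poly_Mapping.keys (h x)"
    and b: "b \<in> Poly_Mapping.keys (prod_mset (image_mset h M))"
    using keys_mult[of "h x" "prod_mset (image_mset h M)"] by auto
  moreover have "w a = c x" using add.prems(1) a by simp
  moreover have "w b = sum_mset (image_mset c M)" using add.IH[of b] add.prems(1) b by simp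
  ultimately show ?case using w_add by simp
qed

definition opts_weight :: "triple \<Rightarrow> nat" where
  "opts_weight = (\<lambda>(F,RC,QC). forest_size QC + forest_edges F + forest_size RC)"

definition opts_trivial :: "triple \<Rightarrow> nat" where
  "opts_trivial = (\<lambda>(F,RC,QC). trivial_count F)"

lemma keys_phi:
  "(F,R,Q) \<in> Poly_Mapping.keys (phi t)
     \<Longrightarrow> tree_size Q + forest_edges F + tree_size R = Suc (tree_size t) \<and> trivial_count F = 0"
proof (induction t arbitrary: F R Q)
  case (Node M)
  have child: "opts_weight k = tree_size c \<and> opts_trivial k = 0"
    if "c \<in># M" "k \<in> Poly_Mapping.keys (child_opts (phi c))" for c k
  proof -
    from keys_lext_ex[OF that(2)[unfolded child_opts_lext]] obtain F' R' Q'
      where p: "(F',R',Q') \<in> Poly_Mapping.keys (phi c)"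
        and "k \<in> Poly_Mapping.keys (nbasis (F' + nt R', {#}, {#Q'#}) + nbasis (F', {#R'#}, children Q'))"
      by auto
    then have "k = (F' + nt R', {#}, {#Q'#}) \<or> k = (F', {#R'#}, children Q')"
      using keys_add[of "nbasis (F' + nt R', {#}, {#Q'#})" "nbasis (F', {#R'#}, children Q')"] by auto
    then show ?thesis
      using Node.IH[OF that(1) p] tree_size_pos[of R'] tree_size_children[of Q']
      by (auto simp: opts_weight_def opts_trivial_def forest_edges_nt trivial_count_nt)
  qed
  have add: "opts_weight (a + b) = opts_weight a + opts_weight b"
    "opts_trivial (a + b) = opts_trivial a + opts_trivial b" for a b
    by (cases a; cases b; simp add: opts_weight_def opts_trivial_def)+
  have zero: "opts_weight 0 = 0" "opts_trivial 0 = 0"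
    by (simp_all add: opts_weight_def opts_trivial_def zero_prod_def)
  from keys_lext_ex[OF Node.prems[unfolded phi_Node]] obtain F' RC QC
    where p: "(F',RC,QC) \<in> Poly_Mapping.keys (root_opts M)" and "(F,R,Q) = (F', Node RC, Node QC)"
    by auto
  moreover have "opts_weight (F',RC,QC) = forest_size M"
    using keys_prod_weight[of opts_weight M "\<lambda>w. child_opts (phi w)" tree_size] p child add zero
    unfolding root_opts_def by (simp add: forest_size_def)
  moreover have "opts_trivial (F',RC,QC) = 0"
    using keys_prod_weight[of opts_trivial M "\<lambda>w. child_opts (phi w)" "\<lambda>_. 0"] p child add zero
    unfolding root_opts_def by simp
  ultimately show ?case by (simp add: opts_weight_def opts_trivial_def forest_size_def)
qed

definition Phi_weight :: "forest \<times> forest \<Rightarrow> nat" where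
  "Phi_weight = (\<lambda>(S,Q). forest_size Q + forest_edges S)"

definition Phi_trivial :: "forest \<times> forest \<Rightarrow> nat" where
  "Phi_trivial = (\<lambda>(S,Q). trivial_count S)"

definition Phi_width :: "forest \<times> forest \<Rightarrow> nat" where
  "Phi_width = (\<lambda>(S,Q). size Q)"

lemma keys_Phi_tree:
  assumes "k \<in> Poly_Mapping.keys (Phi_tree t)"
  shows "Phi_weight k = tree_size t \<and> Phi_trivial k = 0 \<and> Phi_width k = 1"
proof -
  from keys_lext_ex[OF assms[unfolded Phi_tree_lext]] obtain F R Q
    where "(F,R,Q) \<in> Poly_Mapping.keys (phi t)" and "k = (F + nt R, {#Q#})"
    by auto
  then show ?thesis using keys_phi[of F R Q t] tree_size_pos[of R]
    by (simp add: Phi_weight_def Phi_trivial_def Phi_width_def forest_edges_nt trivial_count_nt; arith)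
qed

lemma keys_Phi_forest:
  assumes "(S,Q) \<in> Poly_Mapping.keys (Phi_forest u)"
  shows "forest_size Q + forest_edges S = forest_size u" "\<forall>x\<in>#S. has_edge x" "size Q = size u"
proof -
  have add: "Phi_weight (a + b) = Phi_weight a + Phi_weight b"
    "Phi_trivial (a + b) = Phi_trivial a + Phi_trivial b" "Phi_width (a + b) = Phi_width a + Phi_width b" for a b
    by (cases a; cases b; simp add: Phi_weight_def Phi_trivial_def Phi_width_def)+
  have zero: "Phi_weight 0 = 0" "Phi_trivial 0 = 0" "Phi_width 0 = 0"
    by (simp_all add: Phi_weight_def Phi_trivial_def Phi_width_def zero_prod_def)
  have "Phi_weight (S,Q) = sum_mset (image_mset tree_size u)"
    using keys_prod_weight[of Phi_weight u Phi_tree tree_size "(S,Q)"] add zero assms keys_Phi_tree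
    unfolding Phi_forest_def by blast
  then show "forest_size Q + forest_edges S = forest_size u"
    by (simp add: Phi_weight_def forest_size_def)
  have "Phi_trivial (S,Q) = sum_mset (image_mset (\<lambda>_. 0) u)"
    using keys_prod_weight[of Phi_trivial u Phi_tree "\<lambda>_. 0" "(S,Q)"] add zero assms keys_Phi_tree
    unfolding Phi_forest_def by blast
  then show "\<forall>x\<in>#S. has_edge x" by (simp add: Phi_trivial_def trivial_count_0_iff)
  have "Phi_width (S,Q) = sum_mset (image_mset (\<lambda>_. 1) u)"
    using keys_prod_weight[of Phi_width u Phi_tree "\<lambda>_. 1" "(S,Q)"] add zero assms keys_Phi_tree
    unfolding Phi_forest_def by blast
  then show "size Q = size u" by (simp add: Phi_width_def size_multiset_overloaded_eq)
qed

lemma keys_Phi_forest_edge: "p \<in> Poly_Mapping.keys (Phi_forest u) \<Longrightarrow> \<forall>x\<in>#fst p. has_edge x"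
  using keys_Phi_forest(2)[of "fst p" "snd p" u] by simp

lemma keys_Phi_forest_smaller:
  "(S,Q) \<in> Poly_Mapping.keys (Phi_forest u) \<Longrightarrow> S \<noteq> {#} \<Longrightarrow> forest_size Q < forest_size u"
  using keys_Phi_forest[of S Q u] forest_edges_pos[of S] by auto

definition apply_left :: "(forest \<Rightarrow> 'k::comm_ring_1) \<Rightarrow> forest \<times> forest \<Rightarrow> (forest \<Rightarrow>\<^sub>0 'k)" where
  "apply_left a p = Poly_Mapping.single (snd p) (a (fst p))"

definition tL_basis :: "(forest \<Rightarrow> 'k::comm_ring_1) \<Rightarrow> forest \<Rightarrow> (forest \<Rightarrow>\<^sub>0 'k)" where
  "tL_basis a u = lext_nat (apply_left a) (Phi_forest u)"

lemma tL_lext: "tL a = lext (tL_basis a)"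
proof -
  have "left_apply a X = lext (apply_left a) X" for X
    unfolding left_apply_def lext_def apply_left_def by (rule sum.cong) (simp_all add: smult_single)
  then show ?thesis
    by (simp add: fun_eq_iff tL_def Phi_def Phi_forest_def lext_lext lext_of_nat_pm tL_basis_def[abs_def])
qed

lemma tL_basis_eq: "tL a (basis u) = tL_basis a u"
  by (simp add: tL_lext)

lemma tL_linear: "linear_map (tL a)"
  unfolding linear_map_def tL_lext by (simp add: lext_add lext_smult)

lemma basis_Hset: "\<forall>x\<in>#S. has_edge x \<Longrightarrow> basis S \<in> Hset"
  by (simp add: Hset_def)

lemma infinitesimal_character_basis:
  assumes "infinitesimal_character a" "\<forall>x\<in>#S1. has_edge x" "\<forall>x\<in>#S2. has_edge x"
  shows "a (S1 + S2) = a S1 * (if S2 = {#} then 1 else 0) + (if S1 = {#} then 1 else 0) * a S2"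
proof -
  have "lfun a (basis S1 * basis S2) = lfun a (basis S1) * epsH (basis S2) + epsH (basis S1) * lfun a (basis S2)"
    using assms(1) basis_Hset[OF assms(2)] basis_Hset[OF assms(3)]
    unfolding infinitesimal_character_def by blast
  then show ?thesis by (simp add: mult_single lfun_def epsH_def lookup_single)
qed

lemma character_basis:
  assumes "character \<phi>" "\<forall>x\<in>#S1. has_edge x" "\<forall>x\<in>#S2. has_edge x"
  shows "\<phi> (S1 + S2) = \<phi> S1 * \<phi> S2"
proof -
  have "lfun \<phi> (basis S1 * basis S2) = lfun \<phi> (basis S1) * lfun \<phi> (basis S2)"
    using assms(1) basis_Hset[OF assms(2)] basis_Hset[OF assms(3)]
    unfolding character_def by blast
  then show ?thesis by (simp add: mult_single lfun_def)
qed

lemma character_empty: "character \<phi> \<Longrightarrow> \<phi> {#} = 1"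
  unfolding character_def lfun_def by simp

lemma lext_derivation:
  fixes d :: "'a::comm_monoid_add \<Rightarrow> ('a \<Rightarrow>\<^sub>0 'k::comm_semiring_1)"
  assumes "\<And>u v. d (u + v) = d u * basis v + basis u * d v"
  shows "lext d (x * y) = lext d x * y + x * lext d y"
proof -
  have "lext d (x * y) = lext (\<lambda>u. lext (\<lambda>v. d (u + v)) y) x"
    unfolding mult_expand[of x y] by (simp add: lext_lext)
  also have "\<dots> = lext (\<lambda>u. lext (\<lambda>v. d u * basis v) y) x + lext (\<lambda>u. lext (\<lambda>v. basis u * d v) y) x"
    by (rule lext_plus_cong, rule lext_plus_cong) (rule assms)
  also have "\<dots> = lext d x * lext basis y + lext basis x * lext d y"
    by (simp only: lext_mult_lext)
  finally show ?thesis by simp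
qed

lemma tL_basis_Leibniz:
  assumes a: "infinitesimal_character a"
  shows "tL_basis a (u + v) = tL_basis a u * basis v + basis u * tL_basis a v"
proof -
  define e :: "forest \<times> forest \<Rightarrow> (forest \<Rightarrow>\<^sub>0 'a)" where
    "e = (\<lambda>p. if fst p = {#} then basis (snd p) else 0)"
  have counit: "lext_nat e (Phi_forest w) = basis w" for w
    unfolding e_def by (rule counit_Phi_forest)
  have Leibniz: "apply_left a (p + q) = apply_left a p * e q + e p * apply_left a q"
    if "p \<in> Poly_Mapping.keys (Phi_forest u)" "q \<in> Poly_Mapping.keys (Phi_forest v)" for p q
    using infinitesimal_character_basis[OF a keys_Phi_forest_edge[OF that(1)] keys_Phi_forest_edge[OF that(2)]]
    by (cases "fst p = {#}"; cases "fst q = {#}")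
      (simp_all add: apply_left_def e_def mult_single single_add)
  have "tL_basis a (u + v) = lext_nat (\<lambda>p. lext_nat (\<lambda>q. apply_left a (p + q)) (Phi_forest v)) (Phi_forest u)"
    unfolding tL_basis_def by (simp add: lext_nat_mult_expand)
  also have "\<dots> = lext_nat (\<lambda>p. lext_nat (\<lambda>q. apply_left a p * e q) (Phi_forest v)) (Phi_forest u)
      + lext_nat (\<lambda>p. lext_nat (\<lambda>q. e p * apply_left a q) (Phi_forest v)) (Phi_forest u)"
    by (rule lext_nat_plus_cong, rule lext_nat_plus_cong) (rule Leibniz)
  also have "\<dots> = tL_basis a u * lext_nat e (Phi_forest v) + lext_nat e (Phi_forest u) * tL_basis a v"
    by (simp add: tL_basis_def lext_nat_mult_lext_nat)
  finally show ?thesis by (simp add: counit)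
qed

lemma tL_basis_mult:
  assumes \<phi>: "character \<phi>"
  shows "tL_basis \<phi> (u + v) = tL_basis \<phi> u * tL_basis \<phi> v"
proof -
  have mult: "apply_left \<phi> (p + q) = apply_left \<phi> p * apply_left \<phi> q"
    if "p \<in> Poly_Mapping.keys (Phi_forest u)" "q \<in> Poly_Mapping.keys (Phi_forest v)" for p q
    using character_basis[OF \<phi> keys_Phi_forest_edge[OF that(1)] keys_Phi_forest_edge[OF that(2)]]
    by (simp add: apply_left_def mult_single)
  have "tL_basis \<phi> (u + v) = lext_nat (\<lambda>p. lext_nat (\<lambda>q. apply_left \<phi> (p + q)) (Phi_forest v)) (Phi_forest u)"
    unfolding tL_basis_def by (simp add: lext_nat_mult_expand)
  also have "\<dots> = lext_nat (\<lambda>p. lext_nat (\<lambda>q. apply_left \<phi> p * apply_left \<phi> q) (Phi_forest v)) (Phi_forest u)"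
    by (rule lext_nat_cong, rule lext_nat_cong) (rule mult)
  finally show ?thesis by (simp add: tL_basis_def lext_nat_mult_lext_nat)
qed

lemma tL_derivation: "infinitesimal_character a \<Longrightarrow> tL a (x * y) = tL a x * y + x * tL a y"
  unfolding tL_lext by (rule lext_derivation) (rule tL_basis_Leibniz)

lemma tL_mult: "character \<phi> \<Longrightarrow> tL \<phi> (x * y) = tL \<phi> x * tL \<phi> y"
  unfolding tL_lext by (rule lext_mult_hom2) (rule tL_basis_mult)

lemma tL_one: "character \<phi> \<Longrightarrow> tL \<phi> 1 = 1"
  by (simp add: tL_lext lext_one tL_basis_def lext_nat_one apply_left_def zero_prod_def character_empty)

text \<open>By \<open>Phi_cuts_compat\<close>, the coproduct of \<open>tL a u\<close> is obtained by applying
  \<open>a\<close> to the product of the \<open>H\<close>-parts of \<open>Phi V\<close> and \<open>Phi W\<close>, summed over the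
  cuts \<open>(V, W)\<close> of \<open>u\<close>.\<close>

definition apply_left3 :: "(forest \<Rightarrow> 'k::comm_ring_1) \<Rightarrow> forest \<times> forest \<times> forest \<Rightarrow> (forest \<times> forest \<Rightarrow>\<^sub>0 'k)" where
  "apply_left3 a t = Poly_Mapping.single (snd t) (a (fst t))"

lemma DeltaCK_lext: "DeltaCK x = lext (\<lambda>u. of_nat_pm (cuts_forest u)) x"
  by (simp add: DeltaCK_def cuts_forest_def)

lemma DeltaCK_tL_basis:
  "DeltaCK (tL_basis a u) = lext_nat (\<lambda>p. lext_nat (apply_left3 a) (Phi_after_cut p)) (cuts_forest u)"
proof -
  have "DeltaCK (tL_basis a u) = lext_nat (\<lambda>p. lext (\<lambda>v. of_nat_pm (cuts_forest v)) (apply_left a p)) (Phi_forest u)"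
    unfolding DeltaCK_lext tL_basis_def by (rule lext_lext_nat)
  also have "\<dots> = lext_nat (\<lambda>p. lext_nat (apply_left3 a) (cut_after_Phi p)) (Phi_forest u)"
  proof (rule lext_nat_cong)
    fix p :: "forest \<times> forest"
    obtain S Q where p: "p = (S,Q)" by (cases p) auto
    have single: "Poly_Mapping.single k (a S) = smult (a S) (basis k)" for k :: "forest \<times> forest"
      by (simp add: smult_single)
    have "lext_nat (apply_left3 a) (cut_after_Phi p) = smult (a S) (lext_nat basis (cuts_forest Q))"
      unfolding p cut_after_Phi_def
      by (simp add: lext_nat_lext split_def apply_left3_def single lext_nat_smult_fun)
    then show "lext (\<lambda>v. of_nat_pm (cuts_forest v)) (apply_left a p) = lext_nat (apply_left3 a) (cut_after_Phi p)"
      by (simp add: p apply_left_def lext_single of_nat_pm_lext_nat)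
  qed
  also have "\<dots> = lext_nat (\<lambda>p. lext_nat (apply_left3 a) (Phi_after_cut p)) (cuts_forest u)"
    using Phi_cuts_compat[of u] by (metis lext_nat_lext)
  finally show ?thesis .
qed

lemma Phi_after_cut_apply_left3:
  "lext_nat (apply_left3 a) (Phi_after_cut (V,W)) = lext_nat (\<lambda>p. lext_nat (\<lambda>q.
     Poly_Mapping.single (snd p, snd q) (a (fst p + fst q))) (Phi_forest W)) (Phi_forest V)"
  unfolding Phi_after_cut_def by (simp add: lext_nat_lext split_def apply_left3_def)

lemma tensor_lext: "tensor P Q = lext (\<lambda>F. lext (\<lambda>G. basis (F,G)) Q) P"
  unfolding tensor_def lext_def by (simp add: smult_sum smult_single mult.assoc)

lemma tensor_tL_basis_left:
  "tensor (tL_basis a V) (basis W) = lext_nat (\<lambda>p. Poly_Mapping.single (snd p, W) (a (fst p))) (Phi_forest V)"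
  unfolding tensor_lext tL_basis_def by (simp add: lext_lext_nat apply_left_def lext_single smult_single)

lemma tensor_tL_basis_right:
  "tensor (basis V) (tL_basis a W) = lext_nat (\<lambda>q. Poly_Mapping.single (V, snd q) (a (fst q))) (Phi_forest W)"
  unfolding tensor_lext tL_basis_def by (simp add: lext_lext_nat apply_left_def lext_single smult_single)

lemma tensor_tL_basis_both:
  "tensor (tL_basis a V) (tL_basis a W) = lext_nat (\<lambda>p. lext_nat (\<lambda>q.
     Poly_Mapping.single (snd p, snd q) (a (fst p) * a (fst q))) (Phi_forest W)) (Phi_forest V)"
  unfolding tensor_lext tL_basis_def
  by (simp add: lext_lext_nat apply_left_def lext_single smult_single lext_nat_smult_fun[symmetric])

text \<open>For an infinitesimal character only the terms with one trivial \<open>H\<close>-part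
  survive; by the counit property they give \<open>tL \<otimes> Id + Id \<otimes> tL\<close>.\<close>

lemma infinitesimal_Phi_after_cut:
  assumes a: "infinitesimal_character a"
  shows "lext_nat (apply_left3 a) (Phi_after_cut (V,W)) = tensor (tL_basis a V) (basis W) + tensor (basis V) (tL_basis a W)"
proof -
  define G where "G = (\<lambda>Qv::forest. lext_nat (\<lambda>q. Poly_Mapping.single (Qv, snd q) (a (fst q))) (Phi_forest W))"
  have inner: "lext_nat (\<lambda>q. Poly_Mapping.single (snd p, snd q) (a (fst p + fst q))) (Phi_forest W)
      = Poly_Mapping.single (snd p, W) (a (fst p)) + (if fst p = {#} then G (snd p) else 0)"
    if p: "p \<in> Poly_Mapping.keys (Phi_forest V)" for p
  proof -
    have "lext_nat (\<lambda>q. Poly_Mapping.single (snd p, snd q) (a (fst p + fst q))) (Phi_forest W)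
      = lext_nat (\<lambda>q. smult (a (fst p)) (if fst q = {#} then basis (snd p, snd q) else 0)) (Phi_forest W)
        + lext_nat (\<lambda>q. if fst p = {#} then Poly_Mapping.single (snd p, snd q) (a (fst q)) else 0) (Phi_forest W)"
    proof (rule lext_nat_plus_cong)
      fix q assume q: "q \<in> Poly_Mapping.keys (Phi_forest W)"
      show "Poly_Mapping.single (snd p, snd q) (a (fst p + fst q)) =
        smult (a (fst p)) (if fst q = {#} then basis (snd p, snd q) else 0) +
        (if fst p = {#} then Poly_Mapping.single (snd p, snd q) (a (fst q)) else 0)"
        using infinitesimal_character_basis[OF a keys_Phi_forest_edge[OF p] keys_Phi_forest_edge[OF q]]
        by (cases "fst p = {#}"; cases "fst q = {#}") (simp_all add: smult_single single_add)
    qed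
    also have "\<dots> = Poly_Mapping.single (snd p, W) (a (fst p)) + (if fst p = {#} then G (snd p) else 0)"
      by (simp only: lext_nat_smult_fun lext_nat_if_const counit_Phi_forest[of "\<lambda>Qw. basis (snd p, Qw)"])
        (simp add: smult_single G_def)
    finally show ?thesis .
  qed
  have "lext_nat (apply_left3 a) (Phi_after_cut (V,W))
      = lext_nat (\<lambda>p. Poly_Mapping.single (snd p, W) (a (fst p))) (Phi_forest V)
        + lext_nat (\<lambda>p. if fst p = {#} then G (snd p) else 0) (Phi_forest V)"
    unfolding Phi_after_cut_apply_left3 by (rule lext_nat_plus_cong) (rule inner)
  also have "\<dots> = tensor (tL_basis a V) (basis W) + tensor (basis V) (tL_basis a W)"
    by (simp add: tensor_tL_basis_left counit_Phi_forest[of G] G_def tensor_tL_basis_right)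
  finally show ?thesis .
qed

lemma character_Phi_after_cut:
  assumes "character \<phi>"
  shows "lext_nat (apply_left3 \<phi>) (Phi_after_cut (V,W)) = tensor (tL_basis \<phi> V) (tL_basis \<phi> W)"
  unfolding Phi_after_cut_apply_left3 tensor_tL_basis_both
  by (rule lext_nat_cong, rule lext_nat_cong)
    (simp add: character_basis[OF assms keys_Phi_forest_edge keys_Phi_forest_edge])

lemma DeltaCK_tL: "DeltaCK (tL a x) = lext (\<lambda>u. DeltaCK (tL_basis a u)) x"
  by (simp add: tL_lext DeltaCK_lext[of "lext _ _"] lext_lext DeltaCK_lext[of "tL_basis _ _", symmetric])

lemma tmap_DeltaCK:
  "tmap f g (DeltaCK x)
     = lext (\<lambda>u. lext_nat (\<lambda>p. tensor (f (basis (fst p))) (g (basis (snd p)))) (cuts_forest u)) x"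
  by (simp add: tmap_def lext_def[symmetric] DeltaCK_lext lext_lext lext_of_nat_pm)

lemma tL_coderivation:
  assumes a: "infinitesimal_character a"
  shows "DeltaCK (tL a x) = tmap (tL a) id (DeltaCK x) + tmap id (tL a) (DeltaCK x)"
proof -
  have "DeltaCK (tL_basis a u)
      = lext_nat (\<lambda>p. tensor (tL a (basis (fst p))) (id (basis (snd p)))) (cuts_forest u)
      + lext_nat (\<lambda>p. tensor (id (basis (fst p))) (tL a (basis (snd p)))) (cuts_forest u)" for u
    unfolding DeltaCK_tL_basis
    by (rule lext_nat_plus_cong) (metis infinitesimal_Phi_after_cut[OF a] prod.collapse tL_basis_eq id_apply)
  then show ?thesis
    unfolding DeltaCK_tL tmap_DeltaCK by (rule lext_plus_cong)
qed

lemma tL_comultiplicative: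
  assumes \<phi>: "character \<phi>"
  shows "DeltaCK (tL \<phi> x) = tmap (tL \<phi>) (tL \<phi>) (DeltaCK x)"
proof -
  have "DeltaCK (tL_basis \<phi> u)
      = lext_nat (\<lambda>p. tensor (tL \<phi> (basis (fst p))) (tL \<phi> (basis (snd p)))) (cuts_forest u)" for u
    unfolding DeltaCK_tL_basis
    by (rule lext_nat_cong) (metis character_Phi_after_cut[OF \<phi>] prod.collapse tL_basis_eq)
  then show ?thesis
    unfolding DeltaCK_tL tmap_DeltaCK by (rule lext_cong)
qed

text \<open>Every quotient \<open>Q\<close> occurring in \<open>Phi u\<close> has as many trees as \<open>u\<close>; hence
  for a character the coefficient of the empty forest in \<open>tL \<phi> u\<close> is \<open>1\<close> if
  \<open>u\<close> is empty and \<open>0\<close> otherwise, and \<open>tL \<phi>\<close> preserves the counit.\<close>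

lemma lookup_tL_basis_empty:
  assumes "character \<phi>"
  shows "Poly_Mapping.lookup (tL_basis \<phi> u) {#} = (if u = {#} then 1 else 0)"
proof (cases "u = {#}")
  case True
  then show ?thesis
    using assms by (simp add: tL_basis_def lext_nat_one apply_left_def zero_prod_def character_empty)
next
  case False
  have "Poly_Mapping.lookup (apply_left \<phi> p) {#} = 0" if "p \<in> Poly_Mapping.keys (Phi_forest u)" for p
  proof -
    have "size (snd p) = size u" using keys_Phi_forest(3)[of "fst p" "snd p" u] that by simp
    then have "snd p \<noteq> {#}" using False by auto
    then show ?thesis by (simp add: apply_left_def lookup_single)
  qed
  then show ?thesis using False by (simp add: tL_basis_def lookup_lext_nat)
qed

lemma tL_counit: "character \<phi> \<Longrightarrow> epsCK (tL \<phi> x) = epsCK x"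
proof -
  assume \<phi>: "character \<phi>"
  have "epsCK (tL \<phi> x) = (\<Sum>u\<in>Poly_Mapping.keys x. Poly_Mapping.lookup x u * (if u = {#} then 1 else 0))"
    by (simp add: epsCK_def tL_lext lookup_lext lookup_tL_basis_empty[OF \<phi>])
  also have "\<dots> = Poly_Mapping.lookup x {#}"
    by (simp add: if_distrib[of "\<lambda>t. _ * t"] sum.delta in_keys_iff cong: if_cong)
  finally show ?thesis by (simp add: epsCK_def)
qed

lemma lext_surj_if_basis:
  fixes d :: "'a \<Rightarrow> ('b \<Rightarrow>\<^sub>0 'k::comm_ring_1)"
  assumes "\<And>k. k \<in> Poly_Mapping.keys y \<Longrightarrow> basis k \<in> range (lext d)"
  shows "y \<in> range (lext d)"
proof -
  have smult_in: "smult c z \<in> range (lext d)" if "z \<in> range (lext d)" for c z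
  proof -
    from that obtain w where "z = lext d w" by auto
    then have "lext d (smult c w) = smult c z" by (simp add: lext_smult)
    then show ?thesis by (metis rangeI)
  qed
  have add_in: "z1 + z2 \<in> range (lext d)" if "z1 \<in> range (lext d)" "z2 \<in> range (lext d)" for z1 z2
  proof -
    from that obtain w1 w2 where "z1 = lext d w1" "z2 = lext d w2" by auto
    then have "lext d (w1 + w2) = z1 + z2" by (simp add: lext_add)
    then show ?thesis by (metis rangeI)
  qed
  have zero_in: "0 \<in> range (lext d)"
    by (metis lext_zero rangeI)
  have "(\<Sum>k\<in>K. smult (Poly_Mapping.lookup y k) (basis k)) \<in> range (lext d)"
    if "K \<subseteq> Poly_Mapping.keys y" for K
  proof -
    have "finite K" using that by (rule finite_subset) simp
    then show ?thesis using that
      by (induction K rule: finite_induct) (auto intro!: add_in smult_in zero_in assms)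
  qed
  moreover have "(\<Sum>k\<in>Poly_Mapping.keys y. smult (Poly_Mapping.lookup y k) (basis k)) = y"
    using pm_expand[of y] by (simp add: smult_single)
  ultimately show ?thesis by (metis order_refl)
qed

text \<open>Linear endomorphisms that are unitriangular with respect to a grading \<open>m\<close> of
  the basis (identity plus terms of strictly smaller degree) are bijective.
  Injectivity: a nonzero \<open>z\<close> keeps its coefficient at a basis vector of maximal
  degree.\<close>

lemma unitriangular_kernel:
  fixes d :: "'a \<Rightarrow> ('a \<Rightarrow>\<^sub>0 'k::comm_ring_1)" and m :: "'a \<Rightarrow> nat"
  assumes d: "\<And>u. d u = basis u + r u"
    and r: "\<And>u. Poly_Mapping.keys (r u) \<subseteq> {v. m v < m u}"
    and z0: "lext d z = 0"
  shows "z = 0"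
proof (rule ccontr)
  assume "z \<noteq> 0"
  then have ne: "Poly_Mapping.keys z \<noteq> {}" by simp
  define N where "N = Max (m ` Poly_Mapping.keys z)"
  have "N \<in> m ` Poly_Mapping.keys z" unfolding N_def by (rule Max_in) (use ne in auto)
  then obtain u where u: "u \<in> Poly_Mapping.keys z" "m u = N" by auto
  have no_lower: "Poly_Mapping.lookup (r v) u = 0" if "v \<in> Poly_Mapping.keys z" for v
  proof (rule ccontr)
    assume "Poly_Mapping.lookup (r v) u \<noteq> 0"
    then have "u \<in> Poly_Mapping.keys (r v)" by (simp add: in_keys_iff)
    then have "m u < m v" using r by blast
    moreover have "m v \<le> N" unfolding N_def using that by simp
    ultimately show False using u(2) by simp
  qed
  have "Poly_Mapping.lookup (lext d z) u
      = (\<Sum>v\<in>Poly_Mapping.keys z. Poly_Mapping.lookup z v * (if v = u then 1 else 0))"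
    unfolding lookup_lext
    by (intro sum.cong refl) (simp add: d no_lower lookup_add lookup_single when_def)
  also have "\<dots> = Poly_Mapping.lookup z u"
    using u(1) by (simp add: if_distrib[of "\<lambda>t. _ * t"] sum.delta' cong: if_cong)
  finally show False using z0 u(1) by (simp add: in_keys_iff)
qed

lemma unitriangular_bij:
  fixes d :: "'a \<Rightarrow> ('a \<Rightarrow>\<^sub>0 'k::comm_ring_1)" and m :: "'a \<Rightarrow> nat"
  assumes d: "\<And>u. d u = basis u + r u"
    and r: "\<And>u. Poly_Mapping.keys (r u) \<subseteq> {v. m v < m u}"
  shows "bij (lext d)"
proof (rule bijI)
  show "inj (lext d)"
  proof (rule injI)
    fix x y assume "lext d x = lext d y"
    then have "lext d (x - y) = 0" by (simp add: lext_diff)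
    then have "x - y = 0" by (rule unitriangular_kernel[OF d r])
    then show "x = y" by simp
  qed
next
  have basis_in: "basis u \<in> range (lext d)" for u
  proof (induction "m u" arbitrary: u rule: less_induct)
    case less
    have "r u \<in> range (lext d)"
    proof (rule lext_surj_if_basis)
      fix k assume "k \<in> Poly_Mapping.keys (r u)"
      then have "m k < m u" using r by blast
      then show "basis k \<in> range (lext d)" by (rule less)
    qed
    then obtain w where w: "lext d w = r u" by auto
    have "lext d (basis u - w) = basis u"
      using w by (simp add: lext_diff d)
    then show ?case by (metis rangeI)
  qed
  have "y \<in> range (lext d)" for y
    by (rule lext_surj_if_basis) (rule basis_in)
  then show "surj (lext d)" by blast
qed

lemma tL_bij:
  assumes \<phi>: "character \<phi>"
  shows "bij (tL \<phi>)"
proof -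
  define r where "r u = lext_nat (\<lambda>p. if fst p = {#} then 0 else apply_left \<phi> p) (Phi_forest u)" for u
  have "tL_basis \<phi> u = basis u + r u" for u
  proof -
    have "tL_basis \<phi> u = lext_nat (\<lambda>p. if fst p = {#} then basis (snd p) else 0) (Phi_forest u) + r u"
      unfolding tL_basis_def r_def
      by (rule lext_nat_plus_cong) (simp add: apply_left_def character_empty[OF \<phi>])
    then show ?thesis using counit_Phi_forest[of "\<lambda>Q. basis Q" u] by simp
  qed
  moreover have "Poly_Mapping.keys (r u) \<subseteq> {Q. forest_size Q < forest_size u}" for u
  proof
    fix Q assume "Q \<in> Poly_Mapping.keys (r u)"
    from subsetD[OF keys_lext_nat this[unfolded r_def]] obtain p
      where "p \<in> Poly_Mapping.keys (Phi_forest u)"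
        and "Q \<in> Poly_Mapping.keys (if fst p = {#} then 0 else apply_left \<phi> p)"
      by blast
    moreover from this(2) have "fst p \<noteq> {#}" "Q = snd p"
      by (auto simp: apply_left_def split: if_splits)
    ultimately show "Q \<in> {Q. forest_size Q < forest_size u}"
      using keys_Phi_forest_smaller[of "fst p" "snd p" u] by simp
  qed
  ultimately show ?thesis unfolding tL_lext by (rule unitriangular_bij)
qed

theorem mainTheorem6:
  fixes a \<phi> :: "forest \<Rightarrow> 'k::field_char_0"
  shows "(infinitesimal_character a \<longrightarrow> biderivation (tL a))
       \<and> (character \<phi> \<longrightarrow> hopf_automorphism (tL \<phi>))"
proof (intro conjI impI)
  assume "infinitesimal_character a"
  then show "biderivation (tL a)"
    unfolding biderivation_def using tL_linear tL_derivation tL_coderivation by blast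
next
  assume "character \<phi>"
  then show "hopf_automorphism (tL \<phi>)"
    unfolding hopf_automorphism_def
    using tL_linear tL_bij tL_one tL_mult tL_comultiplicative tL_counit by blast
qed

end
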